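(* Let $k\ge1$, let $a\ge b$ be the dimensions of irreducible algebraic sets $A,B\subset\mathbb{C}^k$, put $m=2k-a-b$, and let $h^*,h_0$ be integers with $b\ge h^*>\dim(A\cap B)$ and $\max(a+b-k,0)\le h_0\le$ the minimum dimension of any irreducible component of $A\cap B$. Let $\mathbb A,\mathbf B\in\mathbb{C}^{(a+b)\times k}$, $\mathbf C\in\mathbb{C}^{k\times 2k}$, $\mathbf d\in\mathbb{C}^k$ be generic, $\mathbf A=[\mathbb A\ \ -\mathbb A]$, $\mathbf Y_h=\mathbf A+\mathbf B\mathbf P_h\mathbf C$, and let $\epsilon\in\mathbb{C}^{2k}$ be the unique solution of $w_{1..k}-w_{k+1..2k}=0$, $\mathbf C w=-\mathbf d$ (so $\mathbf A\epsilon=0$ and $\mathbf C\epsilon+\mathbf d=0$). Fix $h_0\le j<i\le h^*$ and matrices $E\in\mathbb{C}^{2k\times(m-i+j)}$, $F,G\in\mathbb{C}^{2k\times(i-j)}$ such that the columns of $[E\ F]$ form a basis of $\ker\mathbf Y_i$, the columns of $[E\ G]$ form a basis of $\ker\mathbf Y_j$, and $\mathbf P_{ji}\mathbf CF=\mathbf P_{ji}\mathbf CG$ is the $k\times(i-j)$ matrix with $I_{i-j}$ in rows $j+1,\dots,i$ and zeros elsewhere. For $\gamma\in\mathbb{C}$, $t\in[0,1]$, $y\in\mathbb{C}^m$ define $$W_{i,j}(t,y)=\epsilon+\bigl[\,E\ \ \ tF+\gamma(1-t)G\,\bigr]y .$$ Then for all but finitely many $\gamma\in\mathbb{C}$ with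 $|\gamma|=1$, for every $t\in[0,1]$ there is $\tau\in\mathbb{C}$ (nonzero when $t\neq0$) such that the solution set in $\mathbb{C}^{2k}$ of the linear system $$\mathbf A w+\mathbf B(\mathbf P_j+\tau\mathbf P_{ji})(\mathbf C w+\mathbf d)=0$$ is exactly $\{W_{i,j}(t,y):y\in\mathbb{C}^m\}$.
   Context: $\mathbf P_h$ is the $k\times k$ diagonal matrix with $h$ ones followed by $k-h$ zeros; $\mathbf P_{ji}$ is the $k\times k$ diagonal matrix with $j$ zeros, then $i-j$ ones, then $k-i$ zeros. "Generic" means outside a proper algebraic subset of the parameter space (e.g. random complex entries). *)

theory Defs
  imports Complex_Main
begin

inductive polyfun :: "'v set \<Rightarrow> (('v \<Rightarrow> complex) \<Rightarrow> complex) \<Rightarrow> bool" for V where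
  const: "polyfun V (\<lambda>x. c)"
| var: "v \<in> V \<Longrightarrow> polyfun V (\<lambda>x. x v)"
| add: "polyfun V f \<Longrightarrow> polyfun V g \<Longrightarrow> polyfun V (\<lambda>x. f x + g x)"
| mult: "polyfun V f \<Longrightarrow> polyfun V g \<Longrightarrow> polyfun V (\<lambda>x. f x * g x)"

text \<open>C^n is represented by functions nat => complex vanishing from index n on.\<close>
definition cspace :: "nat \<Rightarrow> (nat \<Rightarrow> complex) set" where
  "cspace n = {x. \<forall>i\<ge>n. x i = 0}"

definition alg_set :: "nat \<Rightarrow> (nat \<Rightarrow> complex) set \<Rightarrow> bool" where
  "alg_set k V \<longleftrightarrow> (\<exists>S. (\<forall>f\<in>S. polyfun {..<k} f) \<and> V = {x \<in> cspace k. \<forall>f\<in>S. f x = 0})"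

definition irred_alg :: "nat \<Rightarrow> (nat \<Rightarrow> complex) set \<Rightarrow> bool" where
  "irred_alg k V \<longleftrightarrow> alg_set k V \<and> V \<noteq> {} \<and>
     (\<forall>V1 V2. alg_set k V1 \<and> alg_set k V2 \<and> V = V1 \<union> V2 \<longrightarrow> V = V1 \<or> V = V2)"

text \<open>Krull dimension: maximal length of a strict chain of irreducible algebraic subsets;
  the empty set has dimension -1.\<close>
definition alg_dim :: "nat \<Rightarrow> (nat \<Rightarrow> complex) set \<Rightarrow> int" where
  "alg_dim k V = (if V = {} then -1 else
     int (Max {n. \<exists>Z. (\<forall>l\<le>n. irred_alg k (Z l) \<and> Z l \<subseteq> V) \<and> (\<forall>l<n. Z l \<subset> Z (Suc l))}))"

definition irred_component :: "nat \<Rightarrow> (nat \<Rightarrow> complex) set \<Rightarrow> (nat \<Rightarrow> complex) set \<Rightarrow> bool" where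
  "irred_component k V Z \<longleftrightarrow> irred_alg k Z \<and> Z \<subseteq> V \<and>
     (\<forall>Z'. irred_alg k Z' \<and> Z \<subseteq> Z' \<and> Z' \<subseteq> V \<longrightarrow> Z' = Z)"

type_synonym cmat = "nat \<Rightarrow> nat \<Rightarrow> complex"
type_synonym cvec = "nat \<Rightarrow> complex"

definition mv :: "nat \<Rightarrow> cmat \<Rightarrow> cvec \<Rightarrow> cvec" where
  "mv n M w = (\<lambda>r. \<Sum>s<n. M r s * w s)"

definition Ablk :: "nat \<Rightarrow> cmat \<Rightarrow> cmat" where
  "Ablk k AA = (\<lambda>r s. if s < k then AA r s else - AA r (s - k))"

text \<open>Y_h = A + B P_h C, with B having k columns.\<close>
definition Ymat :: "nat \<Rightarrow> cmat \<Rightarrow> cmat \<Rightarrow> cmat \<Rightarrow> nat \<Rightarrow> cmat" where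
  "Ymat k AA BB CC h = (\<lambda>r s. Ablk k AA r s + (\<Sum>l<min h k. BB r l * CC l s))"

definition col :: "nat \<Rightarrow> cmat \<Rightarrow> nat \<Rightarrow> cvec" where
  "col n M c = (\<lambda>r. if r < n then M r c else 0)"

definition hcat_col :: "nat \<Rightarrow> nat \<Rightarrow> cmat \<Rightarrow> cmat \<Rightarrow> nat \<Rightarrow> cvec" where
  "hcat_col n p E F c = (if c < p then col n E c else col n F (c - p))"

definition ker_mat :: "nat \<Rightarrow> nat \<Rightarrow> cmat \<Rightarrow> cvec set" where
  "ker_mat rows n M = {w \<in> cspace n. \<forall>r<rows. mv n M w r = 0}"

definition is_basis_of :: "cvec set \<Rightarrow> (nat \<Rightarrow> cvec) \<Rightarrow> nat \<Rightarrow> bool" where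
  "is_basis_of K vs q \<longleftrightarrow> (\<forall>l<q. vs l \<in> K) \<and>
     (\<forall>c. (\<forall>r. (\<Sum>l<q. c l * vs l r) = 0) \<longrightarrow> (\<forall>l<q. c l = 0)) \<and>
     (\<forall>w\<in>K. \<exists>c. w = (\<lambda>r. \<Sum>l<q. c l * vs l r))"

text \<open>P_{ji} C F equals the k x (i-j) matrix with I_{i-j} in (0-based) rows j..i-1 and zeros
  elsewhere (F has 2k rows, i-j columns).\<close>
definition PCF_cond :: "nat \<Rightarrow> nat \<Rightarrow> nat \<Rightarrow> cmat \<Rightarrow> cmat \<Rightarrow> bool" where
  "PCF_cond k j i CC F \<longleftrightarrow> (\<forall>r<k. \<forall>c<i - j.
     (if j \<le> r \<and> r < i then (\<Sum>s<2*k. CC r s * F s c) else 0) = (if r = j + c then 1 else 0))"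

text \<open>Solution set in C^{2k} of A w + B (P_j + tau P_{ji}) (C w + d) = 0 (A, B have rows rows).\<close>
definition sol_set :: "nat \<Rightarrow> nat \<Rightarrow> cmat \<Rightarrow> cmat \<Rightarrow> cmat \<Rightarrow> cvec \<Rightarrow> nat \<Rightarrow> nat \<Rightarrow> complex \<Rightarrow> cvec set" where
  "sol_set k rows AA BB CC dd j i \<tau> = {w \<in> cspace (2*k). \<forall>r<rows.
     mv (2*k) (Ablk k AA) w r +
     (\<Sum>l<k. BB r l * (if l < j then 1 else if l < i then \<tau> else 0) * (mv (2*k) CC w l + dd l)) = 0}"

text \<open>W_{i,j}(t,y) = eps + [E  tF + gamma(1-t)G] y, with E having p columns, F, G having q columns.\<close>
definition Wfun :: "nat \<Rightarrow> nat \<Rightarrow> nat \<Rightarrow> cvec \<Rightarrow> cmat \<Rightarrow> cmat \<Rightarrow> cmat \<Rightarrow> complex \<Rightarrow> real \<Rightarrow> cvec \<Rightarrow> cvec" where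
  "Wfun n p q eps E F G \<gamma> t y = (\<lambda>r. if r < n then
      eps r + (\<Sum>c<p. E r c * y c) +
      (\<Sum>c<q. (of_real t * F r c + \<gamma> * of_real (1 - t) * G r c) * y (p + c))
    else 0)"

datatype pvar = VA nat nat | VB nat nat | VC nat nat | VD nat

definition generic :: "((pvar \<Rightarrow> complex) \<Rightarrow> bool) \<Rightarrow> bool" where
  "generic P \<longleftrightarrow> (\<exists>p. polyfun UNIV p \<and> (\<exists>\<sigma>. p \<sigma> \<noteq> 0) \<and> (\<forall>\<sigma>. p \<sigma> \<noteq> 0 \<longrightarrow> P \<sigma>))"

end

theory Submission
  imports Defs "Jordan_Normal_Form.Determinant"
begin

(* Since A eps = 0 and C eps + d = 0, the solution set of the system is eps plus the kernel of
  Y_j + tau B P_ji C.  For generic B the columns j+1..i of B are independent (a minor of B is a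
  nonzero polynomial), so the columns of E, lying in ker Y_i and ker Y_j, are killed by P_ji C.
  The normalisation P_ji C F = P_ji C G = I gives Y_j F = - B_ji and Y_j G = 0, where B_ji
  consists of those columns of B, so t F + gamma (1 - t) G lies in the kernel exactly for
  tau = t / (t + gamma (1 - t)), a denominator vanishing on the unit circle only at gamma = -1.
  Conversely, subtracting from a kernel vector the right combination of these columns removes
  its P_ji C part and leaves a vector of ker Y_j = span [E G] without G component. *)

lemma polyfun_sum:
  "finite S \<Longrightarrow> (\<And>s. s \<in> S \<Longrightarrow> polyfun V (g s)) \<Longrightarrow> polyfun V (\<lambda>x. \<Sum>s\<in>S. g s x)"
  by (induction S rule: finite_induct) (auto intro: polyfun.const polyfun.add)

lemma polyfun_prod:
  "finite S \<Longrightarrow> (\<And>s. s \<in> S \<Longrightarrow> polyfun V (g s)) \<Longrightarrow> polyfun V (\<lambda>x. \<Prod>s\<in>S. g s x)"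
  by (induction S rule: finite_induct) (auto intro: polyfun.const polyfun.mult)

lemma polyfun_det: "polyfun UNIV (\<lambda>\<sigma> :: 'v \<Rightarrow> complex. det (mat q q (\<lambda>(r, c). \<sigma> (f r c))))"
proof -
  have "(\<lambda>\<sigma> :: 'v \<Rightarrow> complex. det (mat q q (\<lambda>(r, c). \<sigma> (f r c)))) =
      (\<lambda>\<sigma>. \<Sum>\<pi> | \<pi> permutes {0..<q}. signof \<pi> * (\<Prod>r = 0..<q. \<sigma> (f r (\<pi> r))))"
  proof
    fix \<sigma> :: "'v \<Rightarrow> complex"
    show "det (mat q q (\<lambda>(r, c). \<sigma> (f r c))) =
        (\<Sum>\<pi> | \<pi> permutes {0..<q}. signof \<pi> * (\<Prod>r = 0..<q. \<sigma> (f r (\<pi> r))))"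
      unfolding det_def'[of "mat q q (\<lambda>(r, c). \<sigma> (f r c))" q, OF mat_carrier]
      by (intro sum.cong prod.cong refl) (auto dest: permutes_in_image)
  qed
  then show ?thesis
    by (simp only:) (intro polyfun_sum polyfun_prod polyfun.mult polyfun.const polyfun.var
        finite_permutations; simp)
qed

lemma det_nonzero_imp_kernel_trivial:
  fixes M :: "nat \<Rightarrow> nat \<Rightarrow> 'a :: idom"
  assumes "det (mat q q (\<lambda>(r, c). M r c)) \<noteq> 0" and "\<And>r. r < q \<Longrightarrow> (\<Sum>c<q. M r c * x c) = 0"
    and "c < q"
  shows "x c = 0"
proof -
  have "mat q q (\<lambda>(r, c). M r c) *\<^sub>v vec q x = 0\<^sub>v q"
    using assms(2) by (auto simp: scalar_prod_def lessThan_atLeast0 row_def)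
  then have "vec q x = 0\<^sub>v q"
    using det_0_iff_vec_prod_zero[of "mat q q (\<lambda>(r, c). M r c)" q] assms(1) by (metis mat_carrier vec_carrier)
  then show ?thesis using \<open>c < q\<close> by (metis index_vec index_zero_vec(1))
qed

definition B_minor :: "nat \<Rightarrow> nat \<Rightarrow> (pvar \<Rightarrow> complex) \<Rightarrow> complex" where
  "B_minor j q \<sigma> = det (mat q q (\<lambda>(r, c). \<sigma> (VB r (j + c))))"

lemma polyfun_B_minor: "polyfun UNIV (B_minor j q)"
  unfolding B_minor_def by (rule polyfun_det)

lemma B_minor_not_identically_zero: "\<exists>\<sigma>. B_minor j q \<sigma> \<noteq> 0"
proof -
  have unit: "mat q q (\<lambda>(r, c). if c = r then 1 else 0) = 1\<^sub>m q"
    unfolding one_mat_def by (rule cong[OF refl]) auto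
  have "B_minor j q (\<lambda>v. case v of VB r l \<Rightarrow> if l = j + r then 1 else 0 | _ \<Rightarrow> 0) = 1"
    unfolding B_minor_def by (simp add: unit)
  then show ?thesis by (metis one_neq_zero)
qed

lemma B_minor_nonzero_imp_inj:
  assumes "B_minor j q \<sigma> \<noteq> 0" and "q \<le> R" and "\<forall>r<R. (\<Sum>c<q. \<sigma> (VB r (j + c)) * x c) = 0"
    and "c < q"
  shows "x c = 0"
  using assms det_nonzero_imp_kernel_trivial[of q "\<lambda>r c. \<sigma> (VB r (j + c))" x c]
  unfolding B_minor_def by simp

lemma sum_lessThan_add: "(\<Sum>l<p + q. f l) = (\<Sum>l<p. f l) + (\<Sum>c<q. f (p + c))"
  for f :: "nat \<Rightarrow> 'a :: comm_monoid_add"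
  by (induction q) (simp_all add: add.assoc)

lemma sum_if_window:
  fixes i j k :: nat
  assumes "i \<le> k" and "j \<le> i"
  shows "(\<Sum>l<k. if j \<le> l \<and> l < i then g l else 0) = (\<Sum>c<i - j. g (j + c))"
proof -
  have "{l \<in> {..<k}. j \<le> l \<and> l < i} = {j..<i}" using assms by auto
  then have "(\<Sum>l<k. if j \<le> l \<and> l < i then g l else 0) = sum g {j..<i}"
    by (metis (no_types) finite_lessThan sum.inter_filter)
  then show ?thesis by (simp add: sum.atLeastLessThan_shift_0 atLeast0LessThan)
qed

lemma sum_mult_delta:
  fixes f :: "nat \<Rightarrow> 'a :: semiring_0"
  assumes "c < q"
  shows "(\<Sum>c'<q. f c' * (if c' = c then z else 0)) = f c * z"
proof -
  have "(\<Sum>c'<q. f c' * (if c' = c then z else 0)) = (\<Sum>c'<q. if c' = c then f c * z else 0)"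
    by (rule sum.cong) auto
  then show ?thesis using assms by simp
qed

lemma mv_lincomb: "mv n M (\<lambda>s. x * u s + y * w s) l = x * mv n M u l + y * mv n M w l"
  by (simp add: mv_def sum.distrib sum_distrib_left algebra_simps)

lemma mv_add: "mv n M (\<lambda>s. u s + w s) l = mv n M u l + mv n M w l"
  by (simp add: mv_def sum.distrib algebra_simps)

lemma mv_diff: "mv n M (\<lambda>s. u s - w s) l = mv n M u l - mv n M w l"
  by (simp add: mv_def sum_subtractf algebra_simps)

lemma mv_sum:
  "finite S \<Longrightarrow> mv n M (\<lambda>s. \<Sum>c\<in>S. y c * v c s) l = (\<Sum>c\<in>S. y c * mv n M (v c) l)"
  unfolding mv_def by (simp add: sum_distrib_left algebra_simps sum.swap[of _ S])

lemma mv_col: "mv n M (Defs.col n N c) l = (\<Sum>s<n. M l s * N s c)"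
  by (simp add: mv_def Defs.col_def)

lemma ker_mat_sum:
  assumes "finite S" and "\<And>c. c \<in> S \<Longrightarrow> v c \<in> ker_mat R n M"
  shows "(\<lambda>r. \<Sum>c\<in>S. y c * v c r) \<in> ker_mat R n M"
  using assms by (auto simp: ker_mat_def cspace_def mv_sum)

lemma ker_mat_diff:
  "u \<in> ker_mat R n M \<Longrightarrow> w \<in> ker_mat R n M \<Longrightarrow> (\<lambda>r. u r - w r) \<in> ker_mat R n M"
  by (auto simp: ker_mat_def cspace_def mv_diff)

definition span_of :: "(nat \<Rightarrow> cvec) \<Rightarrow> nat \<Rightarrow> cvec set" where
  "span_of vs m = range (\<lambda>y r. \<Sum>l<m. y l * vs l r)"

lemma span_ofI: "v = (\<lambda>r. \<Sum>l<m. y l * vs l r) \<Longrightarrow> v \<in> span_of vs m"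
  unfolding span_of_def by blast

lemma ker_mat_eq_span_of:
  assumes "is_basis_of (ker_mat R n M) vs m"
  shows "ker_mat R n M = span_of vs m"
  using assms ker_mat_sum[of "{..<m}" vs] unfolding is_basis_of_def span_of_def by auto

text \<open>\<open>Ydiag k AA BB CC D\<close> is \<open>A + B diag(D) C\<close>: \<open>Y\<^sub>h\<close> is the case \<open>D = P\<^sub>h\<close>, and the system of
  the theorem has the diagonal \<open>proj_weight j i \<tau>\<close> of \<open>P\<^sub>j + \<tau> P\<^sub>j\<^sub>i\<close>.\<close>

definition Ydiag :: "nat \<Rightarrow> cmat \<Rightarrow> cmat \<Rightarrow> cmat \<Rightarrow> (nat \<Rightarrow> complex) \<Rightarrow> cmat" where
  "Ydiag k AA BB CC D = (\<lambda>r s. Ablk k AA r s + (\<Sum>l<k. BB r l * D l * CC l s))"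

definition proj_weight :: "nat \<Rightarrow> nat \<Rightarrow> complex \<Rightarrow> nat \<Rightarrow> complex" where
  "proj_weight j i \<tau> = (\<lambda>l. if l < j then 1 else if l < i then \<tau> else 0)"

lemma mv_Ydiag:
  "mv (2*k) (Ydiag k AA BB CC D) v r =
     mv (2*k) (Ablk k AA) v r + (\<Sum>l<k. BB r l * D l * mv (2*k) CC v l)"
  by (simp add: mv_def Ydiag_def sum.distrib sum_distrib_left sum_distrib_right
      sum.swap[of _ "{..<k}"] algebra_simps)

lemma Ymat_eq_Ydiag: "Ymat k AA BB CC h = Ydiag k AA BB CC (\<lambda>l. if l < h then 1 else 0)"
proof -
  have "{l \<in> {..<k}. l < h} = {..<min h k}" by auto
  then have "(\<Sum>l<min h k. f l) = (\<Sum>l<k. if l < h then f l else 0)" for f :: "nat \<Rightarrow> complex"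
    by (metis (no_types) finite_lessThan sum.inter_filter)
  then show ?thesis unfolding Ymat_def Ydiag_def by (simp add: if_distrib if_distribR cong: if_cong)
qed

lemma Ymat_eq_Ydiag_proj_weight:
  assumes "j \<le> i"
  shows "Ymat k AA BB CC i = Ydiag k AA BB CC (proj_weight j i 1)"
proof -
  have "(\<lambda>l. if l < i then 1 else 0) = proj_weight j i 1"
    using assms by (auto simp: proj_weight_def fun_eq_iff)
  then show ?thesis by (simp add: Ymat_eq_Ydiag)
qed

lemma mv_Ydiag_proj_weight:
  assumes "i \<le> k" and "j \<le> i"
  shows "mv (2*k) (Ydiag k AA BB CC (proj_weight j i \<tau>)) v r =
     mv (2*k) (Ymat k AA BB CC j) v r + \<tau> * (\<Sum>c<i - j. BB r (j + c) * mv (2*k) CC v (j + c))"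
proof -
  have "(\<Sum>l<k. BB r l * proj_weight j i \<tau> l * mv (2*k) CC v l) =
      (\<Sum>l<k. BB r l * (if l < j then 1 else 0) * mv (2*k) CC v l) +
      \<tau> * (\<Sum>l<k. if j \<le> l \<and> l < i then BB r l * mv (2*k) CC v l else 0)"
    unfolding sum_distrib_left sum.distrib[symmetric] by (rule sum.cong) (auto simp: proj_weight_def)
  then show ?thesis
    using sum_if_window[OF assms, of "\<lambda>l. BB r l * mv (2*k) CC v l"]
    by (simp add: Ymat_eq_Ydiag mv_Ydiag)
qed

lemma mv_Ymat_split:
  assumes "i \<le> k" and "j \<le> i"
  shows "mv (2*k) (Ymat k AA BB CC i) v r =
     mv (2*k) (Ymat k AA BB CC j) v r + (\<Sum>c<i - j. BB r (j + c) * mv (2*k) CC v (j + c))"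
  using mv_Ydiag_proj_weight[OF assms, of AA BB CC 1] by (simp add: Ymat_eq_Ydiag_proj_weight[OF assms(2)])

lemma mv_Ablk_eq_0:
  assumes "\<And>l. l < k \<Longrightarrow> eps l = eps (k + l)"
  shows "mv (2*k) (Ablk k AA) eps r = 0"
proof -
  have "mv (2*k) (Ablk k AA) eps r = (\<Sum>s<k. AA r s * eps s) - (\<Sum>s<k. AA r s * eps (k + s))"
    unfolding mv_def mult_2 sum_lessThan_add by (simp add: Ablk_def sum_negf)
  then show ?thesis using assms by simp
qed

lemma sol_set_eq_translate_ker:
  assumes "eps \<in> cspace (2*k)" and "\<And>l. l < k \<Longrightarrow> eps l = eps (k + l)"
    and "\<And>l. l < k \<Longrightarrow> mv (2*k) CC eps l = - dd l"
  shows "sol_set k R AA BB CC dd j i \<tau> =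
    (\<lambda>v r. eps r + v r) ` ker_mat R (2*k) (Ydiag k AA BB CC (proj_weight j i \<tau>))"
proof -
  have "mv (2*k) (Ydiag k AA BB CC (proj_weight j i \<tau>)) (\<lambda>s. w s - eps s) r =
      mv (2*k) (Ablk k AA) w r +
      (\<Sum>l<k. BB r l * (if l < j then 1 else if l < i then \<tau> else 0) * (mv (2*k) CC w l + dd l))"
    for w r
    using mv_Ablk_eq_0[of k eps, OF assms(2)]
    by (simp add: mv_Ydiag mv_diff proj_weight_def assms(3) sum_negf sum.distrib distrib_left)
  then have sol_iff: "w \<in> sol_set k R AA BB CC dd j i \<tau> \<longleftrightarrow>
      (\<lambda>s. w s - eps s) \<in> ker_mat R (2*k) (Ydiag k AA BB CC (proj_weight j i \<tau>))" for w
    using assms(1) by (auto simp: sol_set_def ker_mat_def cspace_def)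
  show ?thesis
  proof (intro equalityI subsetI)
    fix w assume "w \<in> sol_set k R AA BB CC dd j i \<tau>"
    then show "w \<in> (\<lambda>v r. eps r + v r) ` ker_mat R (2*k) (Ydiag k AA BB CC (proj_weight j i \<tau>))"
      by (intro image_eqI[of _ _ "\<lambda>s. w s - eps s"]) (simp_all add: sol_iff)
  qed (auto simp: sol_iff)
qed

lemma PCF_cond_window:
  assumes "PCF_cond k j i CC F" and "i \<le> k" and "c < i - j" and "c' < i - j"
  shows "mv (2*k) CC (Defs.col (2*k) F c) (j + c') = (if c' = c then 1 else 0)"
proof -
  have "j + c' < i" "j + c' < k" using assms(2-4) by linarith+
  with assms(1,3) have "(if j \<le> j + c' \<and> j + c' < i then (\<Sum>s<2*k. CC (j + c') s * F s c) else 0) =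
      (if j + c' = j + c then 1 else 0)"
    unfolding PCF_cond_def by blast
  then show ?thesis using \<open>j + c' < i\<close> by (simp add: mv_col)
qed

definition homotopy_mat :: "cmat \<Rightarrow> cmat \<Rightarrow> complex \<Rightarrow> real \<Rightarrow> cmat" where
  "homotopy_mat F G \<gamma> t = (\<lambda>r c. of_real t * F r c + \<gamma> * of_real (1 - t) * G r c)"

lemma col_homotopy_mat:
  "Defs.col n (homotopy_mat F G \<gamma> t) c =
     (\<lambda>r. of_real t * Defs.col n F c r + \<gamma> * of_real (1 - t) * Defs.col n G c r)"
  by (auto simp: Defs.col_def homotopy_mat_def)

lemma Wfun_eq_hcat_col_sum:
  assumes "eps \<in> cspace n"
  shows "Wfun n p q eps E F G \<gamma> t y =
    (\<lambda>r. eps r + (\<Sum>l<p + q. y l * hcat_col n p E (homotopy_mat F G \<gamma> t) l r))"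
  using assms
  by (auto simp: Wfun_def sum_lessThan_add hcat_col_def Defs.col_def homotopy_mat_def cspace_def
      algebra_simps)

lemma Wfun_range_eq:
  assumes "eps \<in> cspace n"
  shows "{Wfun n p q eps E F G \<gamma> t y | y. y \<in> cspace (p + q)} =
    (\<lambda>v r. eps r + v r) ` span_of (hcat_col n p E (homotopy_mat F G \<gamma> t)) (p + q)"
proof (intro equalityI subsetI)
  fix w assume "w \<in> (\<lambda>v r. eps r + v r) ` span_of (hcat_col n p E (homotopy_mat F G \<gamma> t)) (p + q)"
  then obtain y where w: "w = (\<lambda>r. eps r + (\<Sum>l<p + q. y l * hcat_col n p E (homotopy_mat F G \<gamma> t) l r))"
    unfolding span_of_def by blast
  let ?y = "\<lambda>l. if l < p + q then y l else 0"
  have "w = Wfun n p q eps E F G \<gamma> t ?y"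
    unfolding w Wfun_eq_hcat_col_sum[OF assms] by simp
  moreover have "?y \<in> cspace (p + q)" by (simp add: cspace_def)
  ultimately show "w \<in> {Wfun n p q eps E F G \<gamma> t y | y. y \<in> cspace (p + q)}" by blast
qed (auto simp: Wfun_eq_hcat_col_sum[OF assms] span_of_def)

lemma Wfun_range_cspace_0:
  assumes "eps \<in> cspace n"
  shows "{Wfun n p q eps E F G \<gamma> t y | y. y \<in> cspace 0} = {eps}"
proof -
  have "y \<in> cspace 0 \<longleftrightarrow> y = (\<lambda>_. 0)" for y :: cvec by (auto simp: cspace_def)
  then show ?thesis using assms by (auto simp: Wfun_def cspace_def)
qed

lemma col_in_cspace: "Defs.col n M c \<in> cspace n"
  by (simp add: Defs.col_def cspace_def)

text \<open>The coordinates \<open>j..i-1\<close> of \<open>C v\<close>, i.e. the \<open>P\<^sub>j\<^sub>i C\<close> part of \<open>v\<close>, are called its window.\<close>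

context
  fixes k R j i p q :: nat and AA BB CC E F G :: cmat
  assumes i_le_k: "i \<le> k" and j_less_i: "j < i" and q_eq: "q = i - j"
    and basis_i: "is_basis_of (ker_mat R (2*k) (Ymat k AA BB CC i)) (hcat_col (2*k) p E F) (p + q)"
    and basis_j: "is_basis_of (ker_mat R (2*k) (Ymat k AA BB CC j)) (hcat_col (2*k) p E G) (p + q)"
    and PCF_F: "PCF_cond k j i CC F" and PCF_G: "PCF_cond k j i CC G"
    and B_window_inj: "\<And>x c. \<forall>r<R. (\<Sum>c<q. BB r (j + c) * x c) = 0 \<Longrightarrow> c < q \<Longrightarrow> x c = 0"
begin

lemma mv_Ymat_i:
  "mv (2*k) (Ymat k AA BB CC i) v r =
     mv (2*k) (Ymat k AA BB CC j) v r + (\<Sum>c<q. BB r (j + c) * mv (2*k) CC v (j + c))"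
  using mv_Ymat_split[OF i_le_k] j_less_i q_eq by simp

lemma mv_Ydiag_tau:
  "mv (2*k) (Ydiag k AA BB CC (proj_weight j i \<tau>)) v r =
     mv (2*k) (Ymat k AA BB CC j) v r + \<tau> * (\<Sum>c<q. BB r (j + c) * mv (2*k) CC v (j + c))"
  using mv_Ydiag_proj_weight[OF i_le_k] j_less_i q_eq by simp

lemma col_E_in_ker:
  assumes "l < p"
  shows "Defs.col (2*k) E l \<in> ker_mat R (2*k) (Ymat k AA BB CC i)"
    and "Defs.col (2*k) E l \<in> ker_mat R (2*k) (Ymat k AA BB CC j)"
proof -
  have "hcat_col (2*k) p E F l \<in> ker_mat R (2*k) (Ymat k AA BB CC i)"
    and "hcat_col (2*k) p E G l \<in> ker_mat R (2*k) (Ymat k AA BB CC j)"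
    using basis_i basis_j assms unfolding is_basis_of_def by auto
  then show "Defs.col (2*k) E l \<in> ker_mat R (2*k) (Ymat k AA BB CC i)"
    and "Defs.col (2*k) E l \<in> ker_mat R (2*k) (Ymat k AA BB CC j)"
    using assms by (simp_all add: hcat_col_def)
qed

lemma col_F_in_ker_i:
  assumes "c < q"
  shows "Defs.col (2*k) F c \<in> ker_mat R (2*k) (Ymat k AA BB CC i)"
proof -
  have "hcat_col (2*k) p E F (p + c) \<in> ker_mat R (2*k) (Ymat k AA BB CC i)"
    using basis_i assms unfolding is_basis_of_def by simp
  then show ?thesis by (simp add: hcat_col_def)
qed

lemma col_G_in_ker_j:
  assumes "c < q"
  shows "Defs.col (2*k) G c \<in> ker_mat R (2*k) (Ymat k AA BB CC j)"
proof -
  have "hcat_col (2*k) p E G (p + c) \<in> ker_mat R (2*k) (Ymat k AA BB CC j)"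
    using basis_j assms unfolding is_basis_of_def by simp
  then show ?thesis by (simp add: hcat_col_def)
qed

lemma window_col_F:
  "c < q \<Longrightarrow> c' < q \<Longrightarrow> mv (2*k) CC (Defs.col (2*k) F c) (j + c') = (if c' = c then 1 else 0)"
  using PCF_cond_window[OF PCF_F i_le_k] q_eq by simp

lemma window_col_G:
  "c < q \<Longrightarrow> c' < q \<Longrightarrow> mv (2*k) CC (Defs.col (2*k) G c) (j + c') = (if c' = c then 1 else 0)"
  using PCF_cond_window[OF PCF_G i_le_k] q_eq by simp

text \<open>The columns of \<open>E\<close> lie in both kernels, so \<open>B P\<^sub>j\<^sub>i C\<close> kills them; as \<open>B\<close> is injective on
  the columns \<open>j..i-1\<close>, already \<open>P\<^sub>j\<^sub>i C\<close> does.\<close>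

lemma window_col_E:
  assumes "l < p" and "c < q"
  shows "mv (2*k) CC (Defs.col (2*k) E l) (j + c) = 0"
proof -
  have "\<forall>r<R. (\<Sum>c<q. BB r (j + c) * mv (2*k) CC (Defs.col (2*k) E l) (j + c)) = 0"
    using col_E_in_ker[OF assms(1)] by (simp add: ker_mat_def mv_Ymat_i)
  then show ?thesis
    using B_window_inj[of "\<lambda>c. mv (2*k) CC (Defs.col (2*k) E l) (j + c)"] assms(2) by blast
qed

lemma col_E_in_ker_tau:
  "l < p \<Longrightarrow> Defs.col (2*k) E l \<in> ker_mat R (2*k) (Ydiag k AA BB CC (proj_weight j i \<tau>))"
  using col_E_in_ker(2) window_col_E by (simp add: ker_mat_def mv_Ydiag_tau)

lemma window_col_homotopy:
  "c < q \<Longrightarrow> c' < q \<Longrightarrow> mv (2*k) CC (Defs.col (2*k) (homotopy_mat F G \<gamma> t) c) (j + c') =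
     (if c' = c then of_real t + \<gamma> * of_real (1 - t) else 0)"
  by (simp add: col_homotopy_mat mv_lincomb window_col_F window_col_G)

text \<open>\<open>Y\<^sub>j\<close> maps the \<open>c\<close>-th column of \<open>F\<close> to minus the \<open>(j+c)\<close>-th column of \<open>B\<close> and kills that
  of \<open>G\<close>, while \<open>B P\<^sub>j\<^sub>i C\<close> maps both to that column of \<open>B\<close>; the choice
  \<open>\<tau> = t / (t + \<gamma> (1 - t))\<close> makes the two contributions cancel.\<close>

lemma col_homotopy_in_ker_tau:
  assumes \<tau>: "\<tau> * (of_real t + \<gamma> * of_real (1 - t)) = of_real t" and "c < q"
  shows "Defs.col (2*k) (homotopy_mat F G \<gamma> t) c \<in>
    ker_mat R (2*k) (Ydiag k AA BB CC (proj_weight j i \<tau>))"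
proof -
  let ?h = "Defs.col (2*k) (homotopy_mat F G \<gamma> t) c"
  have "mv (2*k) (Ydiag k AA BB CC (proj_weight j i \<tau>)) ?h r = 0" if "r < R" for r
  proof -
    have "mv (2*k) (Ymat k AA BB CC j) (Defs.col (2*k) F c) r = - BB r (j + c)"
      using col_F_in_ker_i[OF \<open>c < q\<close>] that \<open>c < q\<close>
      by (simp add: ker_mat_def mv_Ymat_i window_col_F sum_mult_delta add_eq_0_iff)
    moreover have "mv (2*k) (Ymat k AA BB CC j) (Defs.col (2*k) G c) r = 0"
      using col_G_in_ker_j[OF \<open>c < q\<close>] that by (simp add: ker_mat_def)
    ultimately have "mv (2*k) (Ymat k AA BB CC j) ?h r = - of_real t * BB r (j + c)"
      by (simp add: col_homotopy_mat mv_lincomb)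
    moreover have "mv (2*k) (Ydiag k AA BB CC (proj_weight j i \<tau>)) ?h r =
        mv (2*k) (Ymat k AA BB CC j) ?h r + \<tau> * (of_real t + \<gamma> * of_real (1 - t)) * BB r (j + c)"
      using \<open>c < q\<close> by (simp add: mv_Ydiag_tau window_col_homotopy sum_mult_delta)
    ultimately show ?thesis using \<tau> by simp
  qed
  then show ?thesis by (simp add: ker_mat_def col_in_cspace)
qed

lemma ker_j_window_zero_in_span_E:
  assumes "u \<in> ker_mat R (2*k) (Ymat k AA BB CC j)" and "\<And>c. c < q \<Longrightarrow> mv (2*k) CC u (j + c) = 0"
  shows "u \<in> span_of (Defs.col (2*k) E) p"
proof -
  obtain \<alpha> where \<alpha>: "u = (\<lambda>r. \<Sum>l<p + q. \<alpha> l * hcat_col (2*k) p E G l r)"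
    using basis_j assms(1) unfolding is_basis_of_def by blast
  have "\<alpha> (p + c) = 0" if "c < q" for c
  proof -
    have "mv (2*k) CC u (j + c) = (\<Sum>l<p. \<alpha> l * mv (2*k) CC (Defs.col (2*k) E l) (j + c)) +
        (\<Sum>c'<q. \<alpha> (p + c') * mv (2*k) CC (Defs.col (2*k) G c') (j + c))"
      by (simp add: \<alpha> sum_lessThan_add hcat_col_def mv_add mv_sum)
    also have "\<dots> = (\<Sum>c'<q. \<alpha> (p + c') * (if c' = c then 1 else 0))"
      using that by (simp add: window_col_E, intro sum.cong) (auto simp: window_col_G)
    also have "\<dots> = \<alpha> (p + c)" using that by (simp add: sum_mult_delta)
    finally show ?thesis using assms(2)[OF that] by simp
  qed
  then have "u = (\<lambda>r. \<Sum>l<p. \<alpha> l * Defs.col (2*k) E l r)"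
    by (simp add: \<alpha> sum_lessThan_add hcat_col_def)
  then show ?thesis by (rule span_ofI)
qed

lemma ker_tau_subset_span_of:
  fixes \<gamma> :: complex and t :: real
  defines "s \<equiv> of_real t + \<gamma> * of_real (1 - t)"
  assumes "s \<noteq> 0" and v: "v \<in> ker_mat R (2*k) (Ydiag k AA BB CC (proj_weight j i (of_real t / s)))"
  shows "v \<in> span_of (hcat_col (2*k) p E (homotopy_mat F G \<gamma> t)) (p + q)"
proof -
  let ?H = "homotopy_mat F G \<gamma> t"
  define x where "x c = mv (2*k) CC v (j + c) / s" for c
  define u where "u = (\<lambda>r. v r - (\<Sum>c<q. x c * Defs.col (2*k) ?H c r))"
  have \<tau>: "of_real t / s * (of_real t + \<gamma> * of_real (1 - t)) = of_real t"
    using \<open>s \<noteq> 0\<close> unfolding s_def by simp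
  have "u \<in> ker_mat R (2*k) (Ydiag k AA BB CC (proj_weight j i (of_real t / s)))"
    unfolding u_def by (intro ker_mat_diff ker_mat_sum v col_homotopy_in_ker_tau[OF \<tau>]) auto
  moreover have u_window: "mv (2*k) CC u (j + c) = 0" if "c < q" for c
  proof -
    have "mv (2*k) CC u (j + c) =
        mv (2*k) CC v (j + c) - (\<Sum>c'<q. x c' * mv (2*k) CC (Defs.col (2*k) ?H c') (j + c))"
      by (simp add: u_def mv_diff mv_sum)
    also have "\<dots> = mv (2*k) CC v (j + c) - (\<Sum>c'<q. x c' * (if c' = c then s else 0))"
      using that by (intro arg_cong2[where f = minus] sum.cong) (auto simp: window_col_homotopy s_def)
    also have "\<dots> = mv (2*k) CC v (j + c) - x c * s"
      using that by (simp add: sum_mult_delta)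
    also have "\<dots> = 0"
      using \<open>s \<noteq> 0\<close> by (simp add: x_def)
    finally show ?thesis .
  qed
  ultimately have "u \<in> ker_mat R (2*k) (Ymat k AA BB CC j)"
    by (simp add: ker_mat_def mv_Ydiag_tau)
  then have "u \<in> span_of (Defs.col (2*k) E) p"
    using u_window by (rule ker_j_window_zero_in_span_E)
  then obtain \<alpha> where u_E: "u = (\<lambda>r. \<Sum>l<p. \<alpha> l * Defs.col (2*k) E l r)"
    unfolding span_of_def by blast
  define y where "y l = (if l < p then \<alpha> l else x (l - p))" for l
  have "v r = u r + (\<Sum>c<q. x c * Defs.col (2*k) ?H c r)" for r
    by (simp add: u_def)
  then have "v = (\<lambda>r. \<Sum>l<p + q. y l * hcat_col (2*k) p E ?H l r)"
    by (simp add: u_E y_def sum_lessThan_add hcat_col_def fun_eq_iff)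
  then show ?thesis by (rule span_ofI)
qed

lemma span_of_subset_ker_tau:
  fixes \<gamma> :: complex and t :: real
  assumes \<tau>: "\<tau> * (of_real t + \<gamma> * of_real (1 - t)) = of_real t"
  shows "span_of (hcat_col (2*k) p E (homotopy_mat F G \<gamma> t)) (p + q) \<subseteq>
    ker_mat R (2*k) (Ydiag k AA BB CC (proj_weight j i \<tau>))"
proof -
  have "hcat_col (2*k) p E (homotopy_mat F G \<gamma> t) l \<in>
      ker_mat R (2*k) (Ydiag k AA BB CC (proj_weight j i \<tau>))" if "l < p + q" for l
  proof (cases "l < p")
    case True
    then show ?thesis by (simp add: hcat_col_def col_E_in_ker_tau)
  next
    case False
    then show ?thesis using that by (simp add: hcat_col_def col_homotopy_in_ker_tau[OF \<tau>])
  qed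
  then show ?thesis unfolding span_of_def by (auto intro!: ker_mat_sum)
qed

lemma ker_tau_eq_span_of:
  fixes \<gamma> :: complex and t :: real
  assumes "of_real t + \<gamma> * of_real (1 - t) \<noteq> 0"
  shows "ker_mat R (2*k) (Ydiag k AA BB CC (proj_weight j i (of_real t / (of_real t + \<gamma> * of_real (1 - t))))) =
    span_of (hcat_col (2*k) p E (homotopy_mat F G \<gamma> t)) (p + q)"
proof
  show "span_of (hcat_col (2*k) p E (homotopy_mat F G \<gamma> t)) (p + q) \<subseteq>
      ker_mat R (2*k) (Ydiag k AA BB CC (proj_weight j i (of_real t / (of_real t + \<gamma> * of_real (1 - t)))))"
    using assms by (intro span_of_subset_ker_tau) simp
qed (use ker_tau_subset_span_of[OF assms] in blast)

end

lemma sol_set_eq_Wfun_range: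
  fixes \<gamma> :: complex and t :: real
  assumes "i \<le> k" and "j < i" and "q = i - j"
    and "is_basis_of (ker_mat R (2*k) (Ymat k AA BB CC i)) (hcat_col (2*k) p E F) (p + q)"
    and "is_basis_of (ker_mat R (2*k) (Ymat k AA BB CC j)) (hcat_col (2*k) p E G) (p + q)"
    and "PCF_cond k j i CC F" and "PCF_cond k j i CC G"
    and "\<And>x c. \<forall>r<R. (\<Sum>c<q. BB r (j + c) * x c) = 0 \<Longrightarrow> c < q \<Longrightarrow> x c = 0"
    and "eps \<in> cspace (2*k)" and "\<And>l. l < k \<Longrightarrow> eps l = eps (k + l)"
    and "\<And>l. l < k \<Longrightarrow> mv (2*k) CC eps l = - dd l"
    and "of_real t + \<gamma> * of_real (1 - t) \<noteq> 0"
  shows "sol_set k R AA BB CC dd j i (of_real t / (of_real t + \<gamma> * of_real (1 - t))) =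
    {Wfun (2*k) p q eps E F G \<gamma> t y | y. y \<in> cspace (p + q)}"
proof -
  have "ker_mat R (2*k) (Ydiag k AA BB CC (proj_weight j i (of_real t / (of_real t + \<gamma> * of_real (1 - t))))) =
      span_of (hcat_col (2*k) p E (homotopy_mat F G \<gamma> t)) (p + q)"
    using assms(1-8,12) by (rule ker_tau_eq_span_of)
  then show ?thesis
    by (simp add: sol_set_eq_translate_ker[OF assms(9-11)] Wfun_range_eq[OF assms(9)])
qed

lemma sol_set_one_eq_Wfun_range_cspace_0:
  assumes "j \<le> i" and "is_basis_of (ker_mat R (2*k) (Ymat k AA BB CC i)) vs 0"
    and "eps \<in> cspace (2*k)" and "\<And>l. l < k \<Longrightarrow> eps l = eps (k + l)"
    and "\<And>l. l < k \<Longrightarrow> mv (2*k) CC eps l = - dd l"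
  shows "sol_set k R AA BB CC dd j i 1 = {Wfun (2*k) p q eps E F G \<gamma> t y | y. y \<in> cspace 0}"
proof -
  have "ker_mat R (2*k) (Ydiag k AA BB CC (proj_weight j i 1)) = {\<lambda>r. 0}"
    using ker_mat_eq_span_of[OF assms(2)] Ymat_eq_Ydiag_proj_weight[OF assms(1)]
    by (simp add: span_of_def)
  then show ?thesis
    using assms(3-5) by (simp add: sol_set_eq_translate_ker Wfun_range_cspace_0)
qed

lemma homotopy_coeff_nonzero:
  fixes \<gamma> :: complex and t :: real
  assumes "cmod \<gamma> = 1" and "\<gamma> \<noteq> -1" and "0 \<le> t" and "t \<le> 1"
  shows "of_real t + \<gamma> * of_real (1 - t) \<noteq> 0"
proof
  assume "of_real t + \<gamma> * of_real (1 - t) = 0"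
  then have eq: "\<gamma> * of_real (1 - t) = - of_real t" by (simp only: add_eq_0_iff)
  then have "cmod (\<gamma> * of_real (1 - t)) = cmod (of_real t :: complex)" by (simp only: norm_minus_cancel)
  then have "1 - t = t" using assms(1,3,4) by (simp only: norm_mult norm_of_real) simp
  with eq have "(\<gamma> + 1) * of_real t = 0" by (simp add: algebra_simps)
  moreover have "t \<noteq> 0" using \<open>1 - t = t\<close> by simp
  ultimately show False using assms(2) by (simp add: add_eq_0_iff2)
qed

text \<open>When \<open>i > k\<close> the hypotheses force \<open>m = 0\<close>: then both kernels are trivial and \<open>\<tau> = 1\<close> works.\<close>

lemma finite_bad_unit_gammas:
  fixes AA BB CC E F G :: cmat and eps dd :: cvec
  assumes "j < i" and dims: "i \<le> k \<and> i - j \<le> m \<or> m = 0"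
    and "eps \<in> cspace (2*k)" and "\<forall>l<k. eps l - eps (k + l) = 0"
    and "\<forall>l<k. mv (2*k) CC eps l = - dd l"
    and "is_basis_of (ker_mat R (2*k) (Ymat k AA BB CC i)) (hcat_col (2*k) (m - (i - j)) E F) m"
    and "is_basis_of (ker_mat R (2*k) (Ymat k AA BB CC j)) (hcat_col (2*k) (m - (i - j)) E G) m"
    and "PCF_cond k j i CC F" and "PCF_cond k j i CC G"
    and "\<And>x c. \<forall>r<R. (\<Sum>c<i - j. BB r (j + c) * x c) = 0 \<Longrightarrow> c < i - j \<Longrightarrow> x c = 0"
  shows "finite {\<gamma>::complex. cmod \<gamma> = 1 \<and> \<not> (\<forall>t::real. 0 \<le> t \<and> t \<le> 1 \<longrightarrow>
             (\<exists>\<tau>. (t \<noteq> 0 \<longrightarrow> \<tau> \<noteq> 0) \<and>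
                sol_set k R AA BB CC dd j i \<tau> =
                  {Wfun (2*k) (m - (i - j)) (i - j) eps E F G \<gamma> t y | y. y \<in> cspace m}))}"
proof (rule finite_subset[of _ "{-1}"])
  have "\<exists>\<tau>. (t \<noteq> 0 \<longrightarrow> \<tau> \<noteq> 0) \<and> sol_set k R AA BB CC dd j i \<tau> =
      {Wfun (2*k) (m - (i - j)) (i - j) eps E F G \<gamma> t y | y. y \<in> cspace m}"
    if "cmod \<gamma> = 1" "\<gamma> \<noteq> -1" "0 \<le> t" "t \<le> 1" for \<gamma> :: complex and t :: real
    using dims
  proof (elim disjE conjE)
    assume "m = 0"
    then show ?thesis
      using assms by (intro exI[of _ 1]) (simp add: sol_set_one_eq_Wfun_range_cspace_0)
  next
    assume "i \<le> k" "i - j \<le> m"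
    have s: "of_real t + \<gamma> * of_real (1 - t) \<noteq> 0"
      using homotopy_coeff_nonzero that by blast
    then show ?thesis
      using assms \<open>i \<le> k\<close> \<open>i - j \<le> m\<close>
        sol_set_eq_Wfun_range[of i k j "i - j" R AA BB CC "m - (i - j)" E F G eps dd t \<gamma>]
      by (intro exI[of _ "of_real t / (of_real t + \<gamma> * of_real (1 - t))"]) simp
  qed
  then show "{\<gamma>::complex. cmod \<gamma> = 1 \<and> \<not> (\<forall>t::real. 0 \<le> t \<and> t \<le> 1 \<longrightarrow>
             (\<exists>\<tau>. (t \<noteq> 0 \<longrightarrow> \<tau> \<noteq> 0) \<and>
                sol_set k R AA BB CC dd j i \<tau> =
                  {Wfun (2*k) (m - (i - j)) (i - j) eps E F G \<gamma> t y | y. y \<in> cspace m}))} \<subseteq> {-1}"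
    by blast
qed simp

theorem lemma2p3:
  fixes k a b hs h0 i j :: nat and A B :: "(nat \<Rightarrow> complex) set"
  assumes "k \<ge> 1"
    and "irred_alg k A" and "irred_alg k B"
    and "alg_dim k A = int a" and "alg_dim k B = int b" and "b \<le> a"
    and "hs \<le> b" and "alg_dim k (A \<inter> B) < int hs"
    and "int a + int b - int k \<le> int h0"
    and "\<forall>Z. irred_component k (A \<inter> B) Z \<longrightarrow> int h0 \<le> alg_dim k Z"
    and "h0 \<le> j" and "j < i" and "i \<le> hs"
  shows "generic (\<lambda>\<sigma>.
    let AA = (\<lambda>r c. \<sigma> (VA r c)); BB = (\<lambda>r c. \<sigma> (VB r c));
        CC = (\<lambda>r c. \<sigma> (VC r c)); dd = (\<lambda>l. \<sigma> (VD l));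
        m = 2*k - a - b; p = m - (i - j)
    in \<forall>eps E F G.
        eps \<in> cspace (2*k) \<and> (\<forall>l<k. eps l - eps (k + l) = 0) \<and>
        (\<forall>l<k. mv (2*k) CC eps l = - dd l) \<and>
        is_basis_of (ker_mat (a+b) (2*k) (Ymat k AA BB CC i)) (hcat_col (2*k) p E F) m \<and>
        is_basis_of (ker_mat (a+b) (2*k) (Ymat k AA BB CC j)) (hcat_col (2*k) p E G) m \<and>
        PCF_cond k j i CC F \<and> PCF_cond k j i CC G
      \<longrightarrow> finite {\<gamma>::complex. cmod \<gamma> = 1 \<and> \<not> (\<forall>t::real. 0 \<le> t \<and> t \<le> 1 \<longrightarrow>
             (\<exists>\<tau>. (t \<noteq> 0 \<longrightarrow> \<tau> \<noteq> 0) \<and>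
                sol_set k (a+b) AA BB CC dd j i \<tau> =
                  {Wfun (2*k) p (i - j) eps E F G \<gamma> t y | y. y \<in> cspace m}))})"
proof -
  have dims: "i \<le> k \<and> i - j \<le> 2*k - a - b \<or> 2*k - a - b = 0" and "i - j \<le> a + b"
    using assms(6,7,9,11-13) by linarith+
  show ?thesis
    unfolding generic_def Let_def
  proof (intro exI[of _ "B_minor j (i - j)"] conjI allI impI polyfun_B_minor
      B_minor_not_identically_zero, goal_cases)
    case (1 \<sigma> eps E F G)
    then show ?case
      using \<open>i - j \<le> a + b\<close>
      by - (elim conjE, rule finite_bad_unit_gammas[OF \<open>j < i\<close> dims], auto intro: B_minor_nonzero_imp_inj)
  qed
qed

end
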